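(* Every dp-minimal integral domain $R$ is divided: for every prime ideal $\mathfrak p$ of $R$ and every $a\in R$, either $\mathfrak p\subseteq aR$ or $aR\subseteq\mathfrak p$ (equivalently, $\mathfrak p=\mathfrak pR_{\mathfrak p}$). In particular, there exists $N\in\mathbb N$ such that for all $a,b$ in the maximal ideal of $R$, either $a\in bR$ or $b^N\in aR$.
   Context: Rings are commutative with identity; dp-minimal means the theory in the language of rings has dp-rank $1$ (such domains are local). A prime ideal $\mathfrak p$ is divided if it is comparable under inclusion with every principal ideal; a ring is divided if every prime ideal is divided. *)

theory Defs
  imports "HOL-Algebra.Algebra"
begin

datatype rterm = RVar nat | RZero | ROne | RAdd rterm rterm | RNeg rterm | RMul rterm rterm

datatype rform = REq rterm rterm | RNot rform | RAnd rform rform | REx nat rform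

fun rt_eval :: "('a, 'b) ring_scheme \<Rightarrow> (nat \<Rightarrow> 'a) \<Rightarrow> rterm \<Rightarrow> 'a" where
  "rt_eval R e (RVar n) = e n"
| "rt_eval R e RZero = \<zero>\<^bsub>R\<^esub>"
| "rt_eval R e ROne = \<one>\<^bsub>R\<^esub>"
| "rt_eval R e (RAdd s t) = rt_eval R e s \<oplus>\<^bsub>R\<^esub> rt_eval R e t"
| "rt_eval R e (RNeg s) = \<ominus>\<^bsub>R\<^esub> rt_eval R e s"
| "rt_eval R e (RMul s t) = rt_eval R e s \<otimes>\<^bsub>R\<^esub> rt_eval R e t"

fun rsat :: "('a, 'b) ring_scheme \<Rightarrow> (nat \<Rightarrow> 'a) \<Rightarrow> rform \<Rightarrow> bool" where
  "rsat R e (REq s t) = (rt_eval R e s = rt_eval R e t)"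
| "rsat R e (RNot f) = (\<not> rsat R e f)"
| "rsat R e (RAnd f g) = (rsat R e f \<and> rsat R e g)"
| "rsat R e (REx n f) = (\<exists>a\<in>carrier R. rsat R (e(n := a)) f)"

text \<open>An ICT pattern of depth 2 and size n in R for formulas phi(x;y), psi(x;z),
  where the object variable x is variable 0 and the parameter tuples are given by
  environments (all other variables).\<close>
definition ict2_pattern :: "('a, 'b) ring_scheme \<Rightarrow> rform \<Rightarrow> rform \<Rightarrow> nat \<Rightarrow> bool" where
  "ict2_pattern R \<phi> \<psi> n \<longleftrightarrow>
     (\<exists>b c :: nat \<Rightarrow> nat \<Rightarrow> 'a.
        (\<forall>i<n. \<forall>v. b i v \<in> carrier R) \<and> (\<forall>j<n. \<forall>v. c j v \<in> carrier R) \<and>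
        (\<forall>i<n. \<forall>j<n. \<exists>a\<in>carrier R.
            (\<forall>k<n. rsat R ((b k)(0 := a)) \<phi> \<longleftrightarrow> k = i) \<and>
            (\<forall>l<n. rsat R ((c l)(0 := a)) \<psi> \<longleftrightarrow> l = j)))"

text \<open>Th(R) has dp-rank 1 (dp-minimal): there is no ICT pattern of depth 2 in a
  single object variable in any model of Th(R); by compactness (Th(R) is complete),
  this is equivalent to: for all formulas phi, psi the finite patterns in R have
  bounded size.\<close>
definition dp_minimal :: "('a, 'b) ring_scheme \<Rightarrow> bool" where
  "dp_minimal R \<longleftrightarrow> (\<forall>\<phi> \<psi>. \<exists>n. \<not> ict2_pattern R \<phi> \<psi> n)"

end

theory Submission
  imports Defs
begin

text \<open>
  All patterns used come from the single formula x \<equiv> y (mod z). If h_0, ..., h_(n-1) lie in uR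
  and are pairwise incongruent modulo v, while k_0, ..., k_(n-1) lie in vR and are pairwise
  incongruent modulo u, then the elements h_i + k_j realize an ICT pattern of size n. In a
  domain, if x \<notin> yR and y \<noteq> 0, the geometric progression x y^i (i < m) is pairwise
  incongruent modulo y^m. Comaximal non-units c, d would thus give patterns of every size
  (from c^m d^i and d^m c^j), so a dp-minimal domain is local. If now a \<notin> bR and
  b^(2m) \<notin> aR, the progressions a b^i modulo b^m and b^m b^j modulo a are incongruent,
  the latter because b^m b^i - b^m b^j is b^m b^i times the unit 1 - b^(j-i); this is a
  pattern of size m. Finally, for a prime P, x \<in> P and a \<notin> P, the alternative a^N \<in> xR \<subseteq> P
  is impossible, so P \<subseteq> aR.
\<close>

definition cong_formula :: rform where
  "cong_formula = REx 3 (REq (RVar 0) (RAdd (RVar 1) (RMul (RVar 2) (RVar 3))))"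

lemma ict2_pattern_zero: "ict2_pattern R \<phi> \<psi> 0"
  by (simp add: ict2_pattern_def)

lemma (in ideal) diff_mem_swap:
  assumes "x \<in> carrier R" "y \<in> carrier R" "x \<ominus> y \<in> I"
  shows "y \<ominus> x \<in> I"
proof -
  have "y \<ominus> x = \<ominus> (x \<ominus> y)"
    using assms by (simp add: a_minus_def minus_add a_comm)
  then show ?thesis
    using assms by simp
qed

lemma (in ideal) add_diff_mem_iff:
  assumes "x \<in> carrier R" "y \<in> carrier R" "k \<in> I"
  shows "(x \<oplus> k) \<ominus> y \<in> I \<longleftrightarrow> x \<ominus> y \<in> I"
proof -
  have k: "k \<in> carrier R"
    using assms(3) by (rule Icarr)
  have shift: "(x \<oplus> k) \<ominus> y = (x \<ominus> y) \<oplus> k"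
    using assms(1,2) k by (simp add: a_minus_def a_ac)
  have unshift: "x \<ominus> y = ((x \<ominus> y) \<oplus> k) \<oplus> \<ominus> k"
    using assms(1,2) k by (simp add: a_minus_def a_assoc r_neg)
  show ?thesis
    unfolding shift
  proof
    assume "(x \<ominus> y) \<oplus> k \<in> I"
    then have "((x \<ominus> y) \<oplus> k) \<oplus> \<ominus> k \<in> I"
      using assms(3) by simp
    then show "x \<ominus> y \<in> I"
      by (metis unshift)
  qed (use assms(3) in simp)
qed

lemma (in ideal) Units_mult_mem_imp_mem:
  assumes "w \<in> Units R" "x \<in> carrier R" "w \<otimes> x \<in> I"
  shows "x \<in> I"
proof -
  have "x = inv w \<otimes> (w \<otimes> x)"
    using assms by (simp add: m_assoc[symmetric] Units_closed Units_inv_closed)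
  then show ?thesis
    using assms by (metis I_l_closed Units_inv_closed)
qed

lemma (in ideal) diff_mem_imp_index_eq:
  fixes n :: nat
  assumes less: "\<And>i j. \<lbrakk>i < j; j < n; f i \<ominus> f j \<in> I\<rbrakk> \<Longrightarrow> False"
    and f: "\<And>i. i < n \<Longrightarrow> f i \<in> carrier R"
    and "i < n" "j < n" "f i \<ominus> f j \<in> I"
  shows "i = j"
proof (rule linorder_cases[of i j])
  assume "i < j"
  then show "i = j"
    using less assms(4,5) by blast
next
  assume "j < i"
  moreover have "f j \<ominus> f i \<in> I"
    using diff_mem_swap f assms(3-5) by blast
  ultimately show "i = j"
    using less assms(3) by blast
qed

lemma (in ideal) comaximal_pow_mem_imp_eq_carrier:
  assumes "c \<in> carrier R" "d \<in> carrier R" "c \<oplus> d = \<one>" "d \<in> I" "c [^] (n::nat) \<in> I"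
  shows "I = carrier R"
  using assms(5)
proof (induction n)
  case 0
  then show ?case
    by (intro one_imp_carrier) simp
next
  case (Suc n)
  have "c [^] n \<otimes> c \<oplus> c [^] n \<otimes> d = c [^] n \<otimes> (c \<oplus> d)"
    using assms(1,2) by (simp add: r_distr)
  moreover have "c [^] n \<otimes> c \<oplus> c [^] n \<otimes> d \<in> I"
    using Suc.prems assms(1,4) by (simp add: I_l_closed)
  ultimately have "c [^] n \<in> I"
    using assms(1,3) by simp
  then show ?case
    by (rule Suc.IH)
qed

lemma (in primeideal) pow_mem_imp_mem:
  assumes "a \<in> carrier R" "a [^] (n::nat) \<in> I"
  shows "a \<in> I"
  using assms(2)
proof (induction n)
  case 0
  then show ?case
    using I_notcarr one_imp_carrier by simp
next
  case (Suc n)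
  then show ?case
    using I_prime[of "a [^] n" a] assms(1) by auto
qed

context cring
begin

lemma mem_cgenideal_iff: "x \<in> PIdl y \<longleftrightarrow> (\<exists>r\<in>carrier R. x = r \<otimes> y)"
  unfolding cgenideal_def by auto

lemma mult_mem_cgenideal: "x \<in> carrier R \<Longrightarrow> y \<in> carrier R \<Longrightarrow> x \<otimes> y \<in> PIdl x"
  unfolding mem_cgenideal_iff by (intro bexI[of _ y]) (auto simp: m_comm)

lemma pow_mem_cgenideal:
  assumes "y \<in> carrier R" "0 < n"
  shows "y [^] (n::nat) \<in> PIdl y"
proof -
  obtain k where "n = Suc k"
    using assms(2) by (cases n) auto
  then show ?thesis
    using assms(1) by (auto simp: mem_cgenideal_iff)
qed

lemma pow_notin_Units:
  assumes "b \<in> carrier R" "b \<notin> Units R" "0 < n"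
  shows "b [^] (n::nat) \<notin> Units R"
proof
  obtain k where n: "n = Suc k"
    using assms(3) by (cases n) auto
  assume "b [^] n \<in> Units R"
  moreover have "b [^] n = b \<otimes> b [^] k"
    using assms(1) by (simp add: n m_comm)
  ultimately have "b \<otimes> b [^] k \<in> Units R"
    by simp
  then show False
    using assms(1,2) unit_factor by blast
qed

lemma comaximal_pow_notin_cgenideal:
  assumes "c \<in> carrier R" "d \<in> carrier R" "c \<oplus> d = \<one>" "d \<notin> Units R"
  shows "c [^] (m::nat) \<notin> PIdl d"
proof
  assume "c [^] m \<in> PIdl d"
  then have "PIdl d = carrier R"
    using assms(1-3) cgenideal_self[OF assms(2)]
    by (intro ideal.comaximal_pow_mem_imp_eq_carrier[OF cgenideal_ideal[OF assms(2)]])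
  then show False
    using assms(2,4) ideal_eq_carrier_iff by blast
qed

lemma geometric_diff_mem_imp_mem_of_local:
  assumes local_ring: "\<And>t. \<lbrakk>t \<in> carrier R; t \<notin> Units R\<rbrakk> \<Longrightarrow> \<one> \<ominus> t \<in> Units R"
    and I: "ideal I R"
    and x: "x \<in> carrier R" and b: "b \<in> carrier R" "b \<notin> Units R" and "i < j"
    and diff: "x \<otimes> b [^] i \<ominus> x \<otimes> b [^] j \<in> I"
  shows "x \<otimes> b [^] (i::nat) \<in> I"
proof -
  have "b [^] j = b [^] i \<otimes> b [^] (j - i)"
    using b(1) \<open>i < j\<close> by (simp add: nat_pow_mult)
  then have "x \<otimes> b [^] i \<ominus> x \<otimes> b [^] j = (\<one> \<ominus> b [^] (j - i)) \<otimes> (x \<otimes> b [^] i)"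
    using x nat_pow_closed[OF b(1), of i] nat_pow_closed[OF b(1), of "j - i"] by simp algebra
  moreover have "\<one> \<ominus> b [^] (j - i) \<in> Units R"
    using b \<open>i < j\<close> by (intro local_ring pow_notin_Units) auto
  ultimately show ?thesis
    using diff x b(1) by (metis ideal.Units_mult_mem_imp_mem[OF I] m_closed nat_pow_closed)
qed

lemma rsat_cong_formula:
  assumes "\<And>t. e t \<in> carrier R"
  shows "rsat R e cong_formula \<longleftrightarrow> e 0 \<ominus> e 1 \<in> PIdl (e 2)"
proof -
  have "rsat R e cong_formula \<longleftrightarrow> (\<exists>w\<in>carrier R. e 0 = e 1 \<oplus> e 2 \<otimes> w)"
    by (simp add: cong_formula_def)
  also have "\<dots> \<longleftrightarrow> (\<exists>w\<in>carrier R. e 0 \<ominus> e 1 = w \<otimes> e 2)"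
  proof (rule bex_cong[OF refl])
    fix w
    assume w: "w \<in> carrier R"
    show "e 0 = e 1 \<oplus> e 2 \<otimes> w \<longleftrightarrow> e 0 \<ominus> e 1 = w \<otimes> e 2"
    proof
      assume "e 0 = e 1 \<oplus> e 2 \<otimes> w"
      then show "e 0 \<ominus> e 1 = w \<otimes> e 2"
        using assms w by algebra
    next
      assume diff: "e 0 \<ominus> e 1 = w \<otimes> e 2"
      have "e 0 = e 1 \<oplus> (e 0 \<ominus> e 1)"
        using assms by algebra
      also have "\<dots> = e 1 \<oplus> e 2 \<otimes> w"
        unfolding diff using assms w by (simp add: m_comm)
      finally show "e 0 = e 1 \<oplus> e 2 \<otimes> w" .
    qed
  qed
  also have "\<dots> \<longleftrightarrow> e 0 \<ominus> e 1 \<in> PIdl (e 2)"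
    by (simp add: mem_cgenideal_iff)
  finally show ?thesis .
qed

lemma rsat_cong_formula_sum_iff:
  assumes h: "\<And>i. i < n \<Longrightarrow> h i \<in> carrier R" and v: "v \<in> carrier R" and k: "k \<in> PIdl v"
    and h_inj: "\<And>i i'. \<lbrakk>i < n; i' < n; h i \<ominus> h i' \<in> PIdl v\<rbrakk> \<Longrightarrow> i = i'"
    and "i < n" "l < n"
  shows "rsat R ((\<lambda>t. if t = 1 then h l else v)(0 := h i \<oplus> k)) cong_formula \<longleftrightarrow> l = i"
proof -
  interpret I: ideal "PIdl v" R
    using v by (rule cgenideal_ideal)
  have "k \<in> carrier R"
    using k by (rule I.Icarr)
  then have "rsat R ((\<lambda>t. if t = 1 then h l else v)(0 := h i \<oplus> k)) cong_formula
      \<longleftrightarrow> (h i \<oplus> k) \<ominus> h l \<in> PIdl v"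
    using h v assms(5,6) by (subst rsat_cong_formula) auto
  also have "\<dots> \<longleftrightarrow> h i \<ominus> h l \<in> PIdl v"
    using h k assms(5,6) by (intro I.add_diff_mem_iff) auto
  also have "\<dots> \<longleftrightarrow> l = i"
    using h_inj h assms(5,6) by (auto simp: a_minus_def r_neg)
  finally show ?thesis .
qed

lemma ict2_pattern_cong_formulaI:
  assumes u: "u \<in> carrier R" and v: "v \<in> carrier R"
    and h: "\<And>i. i < n \<Longrightarrow> h i \<in> PIdl u" and k: "\<And>j. j < n \<Longrightarrow> k j \<in> PIdl v"
    and h_inj: "\<And>i i'. \<lbrakk>i < n; i' < n; h i \<ominus> h i' \<in> PIdl v\<rbrakk> \<Longrightarrow> i = i'"
    and k_inj: "\<And>j j'. \<lbrakk>j < n; j' < n; k j \<ominus> k j' \<in> PIdl u\<rbrakk> \<Longrightarrow> j = j'"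
  shows "ict2_pattern R cong_formula cong_formula n"
proof -
  have h_carr: "\<And>i. i < n \<Longrightarrow> h i \<in> carrier R"
    using h ideal.Icarr[OF cgenideal_ideal[OF u]] by blast
  have k_carr: "\<And>j. j < n \<Longrightarrow> k j \<in> carrier R"
    using k ideal.Icarr[OF cgenideal_ideal[OF v]] by blast
  \<comment> \<open>Parameter 1 of \<open>cong_formula\<close> is the residue; all others, in particular
    the modulus 2, are v resp. u.\<close>
  define b :: "nat \<Rightarrow> nat \<Rightarrow> 'a" where "b = (\<lambda>i t. if t = 1 then h i else v)"
  define c :: "nat \<Rightarrow> nat \<Rightarrow> 'a" where "c = (\<lambda>j t. if t = 1 then k j else u)"
  have "\<exists>a\<in>carrier R. (\<forall>l<n. rsat R ((b l)(0 := a)) cong_formula \<longleftrightarrow> l = i)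
      \<and> (\<forall>l<n. rsat R ((c l)(0 := a)) cong_formula \<longleftrightarrow> l = j)"
    if "i < n" "j < n" for i j
  proof (intro bexI conjI allI impI)
    fix l
    assume "l < n"
    then show "rsat R ((b l)(0 := h i \<oplus> k j)) cong_formula \<longleftrightarrow> l = i"
      unfolding b_def using that h_carr v k h_inj by (intro rsat_cong_formula_sum_iff) auto
  next
    fix l
    assume "l < n"
    moreover have "h i \<oplus> k j = k j \<oplus> h i"
      using that h_carr k_carr by (simp add: a_comm)
    ultimately show "rsat R ((c l)(0 := h i \<oplus> k j)) cong_formula \<longleftrightarrow> l = j"
      unfolding c_def using that k_carr u h k_inj by (metis rsat_cong_formula_sum_iff)
  next
    show "h i \<oplus> k j \<in> carrier R"
      using that h_carr k_carr by simp
  qed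
  then show ?thesis
    unfolding ict2_pattern_def using h_carr k_carr u v
    by (intro exI[of _ b] exI[of _ c]) (auto simp: b_def c_def)
qed

lemma primeideal_subset_or_supset_cgenideal:
  assumes P: "primeideal P R" and a: "a \<in> carrier R"
    and dichotomy: "\<And>x. x \<in> P \<Longrightarrow> x \<in> PIdl a \<or> a [^] (N::nat) \<in> PIdl x"
  shows "P \<subseteq> PIdl a \<or> PIdl a \<subseteq> P"
proof (cases "a \<in> P")
  case True
  then show ?thesis
    using cgenideal_minimal[OF primeideal.axioms(1)[OF P]] by blast
next
  case False
  have "x \<in> PIdl a" if x: "x \<in> P" for x
  proof -
    have "PIdl x \<subseteq> P"
      using cgenideal_minimal[OF primeideal.axioms(1)[OF P] x] .
    then have "a [^] N \<notin> PIdl x"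
      using False primeideal.pow_mem_imp_mem[OF P a] by blast
    then show ?thesis
      using dichotomy[OF x] by blast
  qed
  then show ?thesis
    by blast
qed

end

context domain
begin

lemma pow_nonzero: "y \<in> carrier R \<Longrightarrow> y \<noteq> \<zero> \<Longrightarrow> y [^] (n::nat) \<noteq> \<zero>"
  by (induction n) (auto simp: integral_iff)

lemma mult_mem_cgenideal_cancel:
  assumes "z \<noteq> \<zero>" "x \<in> carrier R" "y \<in> carrier R" "z \<in> carrier R" "z \<otimes> x \<in> PIdl (z \<otimes> y)"
  shows "x \<in> PIdl y"
proof -
  obtain r where r: "r \<in> carrier R" "z \<otimes> x = r \<otimes> (z \<otimes> y)"
    using assms(5) mem_cgenideal_iff by blast
  then have "z \<otimes> x = z \<otimes> (r \<otimes> y)"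
    using assms(3,4) by (simp add: m_lcomm)
  then have "x = r \<otimes> y"
    using assms(1-4) r(1) by (simp add: m_lcancel)
  then show ?thesis
    using r(1) mem_cgenideal_iff by blast
qed

lemma geometric_diff_mem_imp_mem:
  fixes i j m :: nat
  assumes x: "x \<in> carrier R" and y: "y \<in> carrier R" "y \<noteq> \<zero>" and "i < j" "i < m"
    and diff: "x \<otimes> y [^] i \<ominus> x \<otimes> y [^] j \<in> PIdl (y [^] m)"
  shows "x \<in> PIdl y"
proof -
  interpret I: ideal "PIdl y" R
    using y(1) by (rule cgenideal_ideal)
  define t where "t = x \<otimes> y [^] (j - i)"
  have t: "t \<in> carrier R"
    using x y by (simp add: t_def)
  have "y [^] j = y [^] i \<otimes> y [^] (j - i)" "y [^] m = y [^] i \<otimes> y [^] (m - i)"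
    using y(1) \<open>i < j\<close> \<open>i < m\<close> by (simp_all add: nat_pow_mult)
  moreover have "x \<otimes> y [^] i \<ominus> x \<otimes> (y [^] i \<otimes> y [^] (j - i)) = y [^] i \<otimes> (x \<ominus> t)"
    unfolding t_def using x nat_pow_closed[OF y(1), of i] nat_pow_closed[OF y(1), of "j - i"]
    by algebra
  ultimately have "y [^] i \<otimes> (x \<ominus> t) \<in> PIdl (y [^] i \<otimes> y [^] (m - i))"
    using diff by simp
  then have "x \<ominus> t \<in> PIdl (y [^] (m - i))"
    by (rule mult_mem_cgenideal_cancel[rotated 4]) (use x y t pow_nonzero in simp_all)
  also have "PIdl (y [^] (m - i)) \<subseteq> PIdl y"
    using \<open>i < m\<close> by (intro cgenideal_minimal[OF I.is_ideal] pow_mem_cgenideal y(1)) simp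
  finally have "x \<ominus> t \<in> PIdl y" .
  moreover have "t \<in> PIdl y"
    unfolding t_def using \<open>i < j\<close> by (intro I.I_l_closed pow_mem_cgenideal x y(1)) simp
  ultimately have "(x \<ominus> t) \<oplus> t \<in> PIdl y"
    by simp
  moreover have "(x \<ominus> t) \<oplus> t = x"
    using x t by algebra
  ultimately show ?thesis
    by simp
qed

lemma geometric_diff_mem_imp_eq:
  fixes i j m :: nat
  assumes "x \<in> carrier R" "y \<in> carrier R" "y \<noteq> \<zero>" "x \<notin> PIdl y" "i < m" "j < m"
    and "x \<otimes> y [^] i \<ominus> x \<otimes> y [^] j \<in> PIdl (y [^] m)"
  shows "i = j"
proof (rule ideal.diff_mem_imp_index_eq[OF cgenideal_ideal, of "y [^] m" m "\<lambda>i. x \<otimes> y [^] i"])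
  fix i' j' :: nat
  assume "i' < j'" "j' < m" "x \<otimes> y [^] i' \<ominus> x \<otimes> y [^] j' \<in> PIdl (y [^] m)"
  then show False
    using geometric_diff_mem_imp_mem[of x y i' j' m] assms(1-4) by auto
qed (use assms in auto)

lemma ict2_pattern_of_comaximal_nonunits:
  assumes c: "c \<in> carrier R" and d: "d \<in> carrier R" and cd: "c \<oplus> d = \<one>"
    and c_nonunit: "c \<notin> Units R" and d_nonunit: "d \<notin> Units R"
  shows "ict2_pattern R cong_formula cong_formula m"
proof -
  have dc: "d \<oplus> c = \<one>"
    using c d cd by (simp add: a_comm)
  have c0: "c \<noteq> \<zero>" and d0: "d \<noteq> \<zero>"
    using c d cd dc c_nonunit d_nonunit by auto
  show ?thesis
  proof (rule ict2_pattern_cong_formulaI[where u = "c [^] m" and v = "d [^] m"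
        and h = "\<lambda>i. c [^] m \<otimes> d [^] i" and k = "\<lambda>j. d [^] m \<otimes> c [^] j"])
    fix i i'
    assume "i < m" "i' < m" "c [^] m \<otimes> d [^] i \<ominus> c [^] m \<otimes> d [^] i' \<in> PIdl (d [^] m)"
    then show "i = i'"
      using c comaximal_pow_notin_cgenideal[OF c d cd d_nonunit]
      by (intro geometric_diff_mem_imp_eq[OF _ d d0]) simp_all
  next
    fix j j'
    assume "j < m" "j' < m" "d [^] m \<otimes> c [^] j \<ominus> d [^] m \<otimes> c [^] j' \<in> PIdl (c [^] m)"
    then show "j = j'"
      using d comaximal_pow_notin_cgenideal[OF d c dc c_nonunit]
      by (intro geometric_diff_mem_imp_eq[OF _ c c0]) simp_all
  qed (use c d in \<open>simp_all add: mult_mem_cgenideal\<close>)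
qed

lemma one_minus_nonunit_in_Units:
  assumes "\<not> ict2_pattern R cong_formula cong_formula m" "t \<in> carrier R" "t \<notin> Units R"
  shows "\<one> \<ominus> t \<in> Units R"
proof (rule ccontr)
  assume "\<one> \<ominus> t \<notin> Units R"
  moreover have "t \<oplus> (\<one> \<ominus> t) = \<one>"
    using assms(2) by algebra
  ultimately show False
    using assms ict2_pattern_of_comaximal_nonunits[of t "\<one> \<ominus> t" m] by simp
qed

lemma mem_cgenideal_or_pow_mem_cgenideal:
  assumes np: "\<not> ict2_pattern R cong_formula cong_formula m"
    and a: "a \<in> carrier R" and b: "b \<in> carrier R"
  shows "a \<in> PIdl b \<or> b [^] (2 * m) \<in> PIdl a"
proof (rule ccontr)
  assume "\<not> ?thesis"
  then have a_notin: "a \<notin> PIdl b" and b_notin: "b [^] (2 * m) \<notin> PIdl a"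
    by auto
  interpret I: ideal "PIdl a" R
    using a by (rule cgenideal_ideal)
  have "m \<noteq> 0"
    using np by (metis ict2_pattern_zero)
  then have b0: "b \<noteq> \<zero>"
    using b_notin by (auto simp: nat_pow_zero)
  have b_nonunit: "b \<notin> Units R"
    using a b a_notin ideal_eq_carrier_iff by blast
  have "ict2_pattern R cong_formula cong_formula m"
  proof (rule ict2_pattern_cong_formulaI[where u = a and v = "b [^] m"
        and h = "\<lambda>i. a \<otimes> b [^] i" and k = "\<lambda>j. b [^] m \<otimes> b [^] j"])
    fix i i'
    assume "i < m" "i' < m" "a \<otimes> b [^] i \<ominus> a \<otimes> b [^] i' \<in> PIdl (b [^] m)"
    then show "i = i'"
      using a a_notin by (intro geometric_diff_mem_imp_eq[OF _ b b0])
  next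
    show "j = j'" if "j < m" "j' < m" "b [^] m \<otimes> b [^] j \<ominus> b [^] m \<otimes> b [^] j' \<in> PIdl a"
      for j j'
    proof (rule I.diff_mem_imp_index_eq[of m "\<lambda>j. b [^] m \<otimes> b [^] j", OF _ _ that])
      fix i i'
      assume "i < i'" "i' < m" "b [^] m \<otimes> b [^] i \<ominus> b [^] m \<otimes> b [^] i' \<in> PIdl a"
      then have "b [^] m \<otimes> b [^] i \<in> PIdl a"
        using one_minus_nonunit_in_Units[OF np] b b_nonunit I.is_ideal
        by (intro geometric_diff_mem_imp_mem_of_local) simp_all
      then have "(b [^] m \<otimes> b [^] i) \<otimes> b [^] (m - i) \<in> PIdl a"
        using b by (simp add: I.I_r_closed)
      moreover have "(b [^] m \<otimes> b [^] i) \<otimes> b [^] (m - i) = b [^] (2 * m)"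
        using b \<open>i < i'\<close> \<open>i' < m\<close> by (simp add: nat_pow_mult m_assoc mult_2)
      ultimately show False
        using b_notin by simp
    qed (use b in simp)
  qed (use a b in \<open>simp_all add: mult_mem_cgenideal\<close>)
  with np show False
    by simp
qed

lemma dp_minimal_imp_mem_cgenideal_or_pow_mem:
  assumes "dp_minimal R"
  shows "\<exists>N::nat. \<forall>a\<in>carrier R. \<forall>b\<in>carrier R. a \<in> PIdl b \<or> b [^] N \<in> PIdl a"
  using assms mem_cgenideal_or_pow_mem_cgenideal unfolding dp_minimal_def by blast

end

theorem mainTheorem10:
  fixes R :: "('a, 'b) ring_scheme"
  assumes "domain R" and "dp_minimal R"
  shows "(\<forall>P a. primeideal P R \<longrightarrow> a \<in> carrier R \<longrightarrow>
              P \<subseteq> PIdl\<^bsub>R\<^esub> a \<or> PIdl\<^bsub>R\<^esub> a \<subseteq> P)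
       \<and> (\<exists>N::nat. \<forall>M. maximalideal M R \<longrightarrow>
              (\<forall>a\<in>M. \<forall>b\<in>M. a \<in> PIdl\<^bsub>R\<^esub> b \<or> b [^]\<^bsub>R\<^esub> N \<in> PIdl\<^bsub>R\<^esub> a))"
proof -
  interpret domain R
    by fact
  obtain N :: nat where N: "\<forall>a\<in>carrier R. \<forall>b\<in>carrier R.
      a \<in> PIdl\<^bsub>R\<^esub> b \<or> b [^]\<^bsub>R\<^esub> N \<in> PIdl\<^bsub>R\<^esub> a"
    using dp_minimal_imp_mem_cgenideal_or_pow_mem[OF assms(2)] by blast
  have "P \<subseteq> PIdl\<^bsub>R\<^esub> a \<or> PIdl\<^bsub>R\<^esub> a \<subseteq> P" if "primeideal P R" "a \<in> carrier R" for P a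
    using that N ideal.Icarr[OF primeideal.axioms(1)[OF that(1)]]
    by (intro primeideal_subset_or_supset_cgenideal) auto
  moreover have "a \<in> PIdl\<^bsub>R\<^esub> b \<or> b [^]\<^bsub>R\<^esub> N \<in> PIdl\<^bsub>R\<^esub> a"
    if "maximalideal M R" "a \<in> M" "b \<in> M" for M a b
    using that N ideal.Icarr[OF maximalideal.axioms(1)[OF that(1)]] by blast
  ultimately show ?thesis
    by blast
qed

end
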